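(* If $v,w\in\mathfrak{H}$ are words in $x,y$ that are cyclically equivalent (one is obtained from the other by a cyclic permutation of its letters), then $\rho_{1,t}^{(\hbar)}(v)=\rho_{1,t}^{(\hbar)}(w)$.
   Context: Let $\hbar,t$ be formal variables and $\mathfrak{H}=\mathbb{Q}[\hbar,t]\langle x,y\rangle$. Let $\gamma_\hbar^t$ be the algebra automorphism of $\mathfrak{H}$ with $\gamma_\hbar^t(x)=x$, $\gamma_\hbar^t(y)=tx+y+\hbar t$. Make $\mathfrak{H}\otimes\mathfrak{H}$ (over $\mathbb{Q}[\hbar,t]$) an $\mathfrak{H}$-bimodule by $a\diamond(w_1\otimes w_2)=w_1\otimes aw_2$ and $(w_1\otimes w_2)\diamond b=w_1b\otimes w_2$. Let $\mathcal C_{1,t}^{(\hbar)}:\mathfrak{H}\to\mathfrak{H}\otimes\mathfrak{H}$ be the $\mathbb{Q}[\hbar,t]$-linear map with $\mathcal C_{1,t}^{(\hbar)}(x)=-\mathcal C_{1,t}^{(\hbar)}(y)=x\otimes y$ and $\mathcal C_{1,t}^{(\hbar)}(vw)=\mathcal C_{1,t}^{(\hbar)}(v)\diamond(\gamma_\hbar^t)^{-1}(w)+(\gamma_\hbar^t)^{-1}(v)\diamond\mathcal C_{1,t}^{(\hbar)}(w)$. Let $\rho_{1,t}^{(\hbar)}=M_1\circ\mathcal C_{1,t}^{(\hbar)}$ where $M_1(w_1\otimes w_2)=w_1w_2$. *)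

theory Defs
  imports "HOL-Library.Poly_Mapping" "HOL-Computational_Algebra.Polynomial"
begin

text \<open>Coefficient ring Q[hbar,t], realised as (Q[hbar])[t].\<close>
type_synonym coef = "rat poly poly"

definition hbar :: coef where "hbar = [: [:0, 1:] :]"
definition tv :: coef where "tv = [:0, 1:]"

datatype letter = X | Y

text \<open>The free algebra H = Q[hbar,t]<x,y>: finitely supported functions from words to coefficients.\<close>
type_synonym H = "letter list \<Rightarrow>\<^sub>0 coef"
text \<open>The tensor product H (x) H over Q[hbar,t]: free module on pairs of words.\<close>
type_synonym HH = "(letter list \<times> letter list) \<Rightarrow>\<^sub>0 coef"

definition hmul :: "H \<Rightarrow> H \<Rightarrow> H" where
  "hmul p q = (\<Sum>u\<in>Poly_Mapping.keys p. \<Sum>v\<in>Poly_Mapping.keys q. Poly_Mapping.single (u @ v) (Poly_Mapping.lookup p u * Poly_Mapping.lookup q v))"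

definition hone :: H where "hone = Poly_Mapping.single [] 1"

definition word :: "letter list \<Rightarrow> H" where "word w = Poly_Mapping.single w 1"

definition lact :: "H \<Rightarrow> HH \<Rightarrow> HH" where
  "lact a T = (\<Sum>k\<in>Poly_Mapping.keys T. \<Sum>u\<in>Poly_Mapping.keys a.
      Poly_Mapping.single (fst k, u @ snd k) (Poly_Mapping.lookup a u * Poly_Mapping.lookup T k))"

definition ract :: "HH \<Rightarrow> H \<Rightarrow> HH" where
  "ract T b = (\<Sum>k\<in>Poly_Mapping.keys T. \<Sum>u\<in>Poly_Mapping.keys b.
      Poly_Mapping.single (fst k @ u, snd k) (Poly_Mapping.lookup T k * Poly_Mapping.lookup b u))"

definition M1 :: "HH \<Rightarrow> H" where
  "M1 T = (\<Sum>k\<in>Poly_Mapping.keys T. Poly_Mapping.single (fst k @ snd k) (Poly_Mapping.lookup T k))"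

fun gamma_inv_letter :: "letter \<Rightarrow> H" where
  "gamma_inv_letter X = word [X]"
| "gamma_inv_letter Y = word [Y] - Poly_Mapping.single [X] tv - Poly_Mapping.single [] (hbar * tv)"

definition gamma_inv_word :: "letter list \<Rightarrow> H" where
  "gamma_inv_word w = foldr (\<lambda>a r. hmul (gamma_inv_letter a) r) w hone"

fun C_letter :: "letter \<Rightarrow> HH" where
  "C_letter X = Poly_Mapping.single ([X], [Y]) 1"
| "C_letter Y = - Poly_Mapping.single ([X], [Y]) 1"

text \<open>C on words, via the twisted Leibniz rule C(a w) = C(a) <> gamma^-1(w) + gamma^-1(a) <> C(w).\<close>
fun C_word :: "letter list \<Rightarrow> HH" where
  "C_word [] = 0"
| "C_word (a # w) = ract (C_letter a) (gamma_inv_word w) + lact (gamma_inv_letter a) (C_word w)"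

definition C1t :: "H \<Rightarrow> HH" where
  "C1t p = (\<Sum>u\<in>Poly_Mapping.keys p. Poly_Mapping.map (\<lambda>c. Poly_Mapping.lookup p u * c) (C_word u))"

definition rho1t :: "H \<Rightarrow> H" where
  "rho1t p = M1 (C1t p)"

definition cyclically_equivalent :: "letter list \<Rightarrow> letter list \<Rightarrow> bool" where
  "cyclically_equivalent v w \<longleftrightarrow> (\<exists>k. w = rotate k v)"

end

theory Submission
  imports Defs
begin

text \<open>Iterating the twisted Leibniz rule, \<open>C(a\<^sub>1\<cdots>a\<^sub>n)\<close> is the sum over \<open>i\<close> of
  \<open>\<gamma>\<^sup>-\<^sup>1(a\<^sub>1\<cdots>a\<^sub>i\<^sub>-\<^sub>1) \<diamond> C(a\<^sub>i) \<diamond> \<gamma>\<^sup>-\<^sup>1(a\<^sub>i\<^sub>+\<^sub>1\<cdots>a\<^sub>n)\<close>, and \<open>C(a\<^sub>i) = \<plusminus>x \<otimes> y\<close>.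
  The bimodule structure places the right factor in the first tensor slot and the left factor in
  the second, so multiplying out with \<open>M\<^sub>1\<close> and using that \<open>\<gamma>\<^sup>-\<^sup>1\<close> is an algebra map gives
  \<open>\<rho>(a\<^sub>1\<cdots>a\<^sub>n) = \<Sum>\<^sub>i \<plusminus> x \<gamma>\<^sup>-\<^sup>1(a\<^sub>i\<^sub>+\<^sub>1\<cdots>a\<^sub>n a\<^sub>1\<cdots>a\<^sub>i\<^sub>-\<^sub>1) y\<close>:
  a sum over the cyclic rotations of the word, hence invariant under rotating it.\<close>

definition pm_cmul :: "'r::comm_semiring_1 \<Rightarrow> ('a \<Rightarrow>\<^sub>0 'r) \<Rightarrow> 'a \<Rightarrow>\<^sub>0 'r" where
  "pm_cmul c p = Poly_Mapping.map ((*) c) p"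

lemma lookup_pm_cmul [simp]: "Poly_Mapping.lookup (pm_cmul c p) k = c * Poly_Mapping.lookup p k"
  unfolding pm_cmul_def by transfer (simp add: when_def)

lemma keys_pm_cmul: "Poly_Mapping.keys (pm_cmul c p) \<subseteq> Poly_Mapping.keys p"
  by (auto simp: in_keys_iff)

lemma pm_cmul_zero_right [simp]: "pm_cmul c 0 = 0"
  and pm_cmul_zero_left [simp]: "pm_cmul 0 p = 0"
  and pm_cmul_single [simp]: "pm_cmul c (Poly_Mapping.single k d) = Poly_Mapping.single k (c * d)"
  and pm_cmul_cmul [simp]: "pm_cmul c (pm_cmul d p) = pm_cmul (c * d) p"
  and pm_cmul_add: "pm_cmul c (p + q) = pm_cmul c p + pm_cmul c q"
  and pm_cmul_add_left: "pm_cmul (c + d) p = pm_cmul c p + pm_cmul d p"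
  by (rule poly_mapping_eqI; simp add: lookup_add lookup_single when_def algebra_simps)+

lemma pm_cmul_sum: "pm_cmul c (sum f A) = (\<Sum>i\<in>A. pm_cmul c (f i))"
  by (induction A rule: infinite_finite_induct) (auto simp: pm_cmul_add)

lemma poly_mapping_induct [case_names zero single add]:
  assumes "P 0"
    and "\<And>k c. P (Poly_Mapping.single k c)"
    and "\<And>p q. P p \<Longrightarrow> P q \<Longrightarrow> P (p + q)"
  shows "P p"
proof (induction p rule: update_induct)
  case (update p k c)
  then have "Poly_Mapping.update k c p = Poly_Mapping.single k c + p"
    by (intro poly_mapping_eqI) (auto simp: lookup_update lookup_add lookup_single in_keys_iff)
  with update.IH show ?case by (simp add: assms)
qed (rule assms(1))

definition pm_extend :: "('a \<Rightarrow> 'b \<Rightarrow>\<^sub>0 'r::comm_semiring_1) \<Rightarrow> ('a \<Rightarrow>\<^sub>0 'r) \<Rightarrow> 'b \<Rightarrow>\<^sub>0 'r" where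
  "pm_extend f p = (\<Sum>i\<in>Poly_Mapping.keys p. pm_cmul (Poly_Mapping.lookup p i) (f i))"

lemma pm_extend_superset:
  assumes "finite S" "Poly_Mapping.keys p \<subseteq> S"
  shows "pm_extend f p = (\<Sum>i\<in>S. pm_cmul (Poly_Mapping.lookup p i) (f i))"
  unfolding pm_extend_def using assms
  by (intro sum.mono_neutral_left) (auto simp: in_keys_iff)

lemma pm_extend_zero [simp]: "pm_extend f 0 = 0"
  by (simp add: pm_extend_def)

lemma pm_extend_single [simp]: "pm_extend f (Poly_Mapping.single k c) = pm_cmul c (f k)"
  by (cases "c = 0") (simp_all add: pm_extend_def)

lemma pm_extend_add: "pm_extend f (p + q) = pm_extend f p + pm_extend f q"
proof -
  let ?S = "Poly_Mapping.keys p \<union> Poly_Mapping.keys q"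
  have "pm_extend f (p + q) = (\<Sum>i\<in>?S. pm_cmul (Poly_Mapping.lookup (p + q) i) (f i))"
    by (rule pm_extend_superset) (auto simp: keys_add)
  also have "\<dots> = (\<Sum>i\<in>?S. pm_cmul (Poly_Mapping.lookup p i) (f i))
                + (\<Sum>i\<in>?S. pm_cmul (Poly_Mapping.lookup q i) (f i))"
    by (simp add: lookup_add pm_cmul_add_left sum.distrib)
  also have "\<dots> = pm_extend f p + pm_extend f q"
    using pm_extend_superset[of ?S p f] pm_extend_superset[of ?S q f] by simp
  finally show ?thesis .
qed

lemma pm_extend_cmul: "pm_extend f (pm_cmul c p) = pm_cmul c (pm_extend f p)"
proof -
  have "pm_extend f (pm_cmul c p)
      = (\<Sum>i\<in>Poly_Mapping.keys p. pm_cmul (Poly_Mapping.lookup (pm_cmul c p) i) (f i))"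
    by (rule pm_extend_superset) (simp_all add: keys_pm_cmul)
  then show ?thesis by (simp add: pm_extend_def pm_cmul_sum)
qed

lemma pm_extend_sum: "pm_extend f (sum g A) = (\<Sum>i\<in>A. pm_extend f (g i))"
  by (induction A rule: infinite_finite_induct) (auto simp: pm_extend_add)

lemma pm_extend_fun_zero [simp]: "pm_extend (\<lambda>i. 0) p = 0"
  by (simp add: pm_extend_def)

lemma pm_extend_fun_add: "pm_extend (\<lambda>i. f i + g i) p = pm_extend f p + pm_extend g p"
  by (simp add: pm_extend_def pm_cmul_add sum.distrib)

lemma pm_extend_fun_cmul: "pm_extend (\<lambda>i. pm_cmul c (f i)) p = pm_cmul c (pm_extend f p)"
  by (simp add: pm_extend_def pm_cmul_sum mult.commute)

definition pm_bilinear ::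
  "('a \<Rightarrow> 'b \<Rightarrow> 'c) \<Rightarrow> ('a \<Rightarrow>\<^sub>0 'r::comm_semiring_1) \<Rightarrow> ('b \<Rightarrow>\<^sub>0 'r) \<Rightarrow> 'c \<Rightarrow>\<^sub>0 'r" where
  "pm_bilinear f p q = pm_extend (\<lambda>u. pm_extend (\<lambda>v. Poly_Mapping.single (f u v) 1) q) p"

lemma pm_bilinear_eq_sum:
  "pm_bilinear f p q = (\<Sum>u\<in>Poly_Mapping.keys p. \<Sum>v\<in>Poly_Mapping.keys q.
     Poly_Mapping.single (f u v) (Poly_Mapping.lookup p u * Poly_Mapping.lookup q v))"
  by (simp add: pm_bilinear_def pm_extend_def pm_cmul_sum)

lemma pm_bilinear_single [simp]:
  "pm_bilinear f (Poly_Mapping.single u a) (Poly_Mapping.single v b) = Poly_Mapping.single (f u v) (a * b)"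
  and pm_bilinear_zero_left [simp]: "pm_bilinear f 0 q = 0"
  and pm_bilinear_zero_right [simp]: "pm_bilinear f p 0 = 0"
  and pm_bilinear_add_left: "pm_bilinear f (p + p') q = pm_bilinear f p q + pm_bilinear f p' q"
  and pm_bilinear_add_right: "pm_bilinear f p (q + q') = pm_bilinear f p q + pm_bilinear f p q'"
  and pm_bilinear_cmul_left: "pm_bilinear f (pm_cmul c p) q = pm_cmul c (pm_bilinear f p q)"
  and pm_bilinear_cmul_right: "pm_bilinear f p (pm_cmul c q) = pm_cmul c (pm_bilinear f p q)"
  by (simp_all add: pm_bilinear_def pm_extend_add pm_extend_fun_add pm_extend_cmul pm_extend_fun_cmul)

lemma pm_bilinear_sum_right: "pm_bilinear f p (sum g A) = (\<Sum>i\<in>A. pm_bilinear f p (g i))"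
  by (induction A rule: infinite_finite_induct) (auto simp: pm_bilinear_add_right)

lemmas pm_bilinear_additive = pm_bilinear_add_left pm_bilinear_add_right

lemma hmul_eq_pm_bilinear: "hmul p q = pm_bilinear (@) p q"
  by (simp add: hmul_def pm_bilinear_eq_sum)

lemma lact_eq_pm_bilinear: "lact a T = pm_bilinear (\<lambda>u (v, w). (v, u @ w)) a T"
  unfolding lact_def pm_bilinear_eq_sum
  by (subst sum.swap) (simp add: case_prod_beta mult.commute)

lemma ract_eq_pm_bilinear: "ract T b = pm_bilinear (\<lambda>(v, w) u. (v @ u, w)) T b"
  by (simp add: ract_def pm_bilinear_eq_sum case_prod_beta)

lemma M1_eq_pm_extend: "M1 T = pm_extend (\<lambda>(v, w). Poly_Mapping.single (v @ w) 1) T"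
  by (simp add: M1_def pm_extend_def case_prod_beta)

lemma C1t_word: "C1t (word w) = C_word w"
proof -
  have "Poly_Mapping.map (\<lambda>c. c) p = p" for p :: HH
    by transfer (simp add: when_def fun_eq_iff)
  then show ?thesis by (simp add: C1t_def word_def)
qed

lemma hmul_assoc: "hmul (hmul p q) r = hmul p (hmul q r)"
  unfolding hmul_eq_pm_bilinear
proof (induction p rule: poly_mapping_induct)
  case (single u a)
  show ?case
  proof (induction q rule: poly_mapping_induct)
    case (single v b)
    show ?case
      by (induction r rule: poly_mapping_induct) (simp_all add: pm_bilinear_additive mult.assoc)
  qed (simp_all add: pm_bilinear_additive)
qed (simp_all add: pm_bilinear_additive)

lemma hmul_hone_left [simp]: "hmul hone q = q"
  unfolding hmul_eq_pm_bilinear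
  by (induction q rule: poly_mapping_induct) (simp_all add: hone_def pm_bilinear_additive)

lemma gamma_inv_word_Nil [simp]: "gamma_inv_word [] = hone"
  and gamma_inv_word_Cons: "gamma_inv_word (a # w) = hmul (gamma_inv_letter a) (gamma_inv_word w)"
  by (simp_all add: gamma_inv_word_def)

lemma gamma_inv_word_append: "gamma_inv_word (u @ v) = hmul (gamma_inv_word u) (gamma_inv_word v)"
  by (induction u) (simp_all add: gamma_inv_word_Cons hmul_assoc)

definition tensor :: "H \<Rightarrow> H \<Rightarrow> HH" where
  "tensor p q = pm_bilinear Pair p q"

lemma lact_tensor: "lact a (tensor p q) = tensor p (hmul a q)"
  unfolding lact_eq_pm_bilinear tensor_def hmul_eq_pm_bilinear
proof (induction a rule: poly_mapping_induct)
  case (single u c)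
  show ?case
  proof (induction p rule: poly_mapping_induct)
    case (single v d)
    show ?case
      by (induction q rule: poly_mapping_induct) (simp_all add: pm_bilinear_additive ac_simps)
  qed (simp_all add: pm_bilinear_additive)
qed (simp_all add: pm_bilinear_additive)

lemma ract_tensor: "ract (tensor p q) b = tensor (hmul p b) q"
  unfolding ract_eq_pm_bilinear tensor_def hmul_eq_pm_bilinear
proof (induction p rule: poly_mapping_induct)
  case (single u c)
  show ?case
  proof (induction q rule: poly_mapping_induct)
    case (single v d)
    show ?case
      by (induction b rule: poly_mapping_induct) (simp_all add: pm_bilinear_additive ac_simps)
  qed (simp_all add: pm_bilinear_additive)
qed (simp_all add: pm_bilinear_additive)

lemma lact_cmul: "lact a (pm_cmul c T) = pm_cmul c (lact a T)"
  by (simp add: lact_eq_pm_bilinear pm_bilinear_cmul_right)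

lemma lact_sum: "lact a (sum f A) = (\<Sum>i\<in>A. lact a (f i))"
  by (simp add: lact_eq_pm_bilinear pm_bilinear_sum_right)

lemma ract_cmul: "ract (pm_cmul c T) b = pm_cmul c (ract T b)"
  by (simp add: ract_eq_pm_bilinear pm_bilinear_cmul_left)

lemma M1_tensor: "M1 (tensor p q) = hmul p q"
  unfolding M1_eq_pm_extend tensor_def hmul_eq_pm_bilinear
proof (induction p rule: poly_mapping_induct)
  case (single u c)
  show ?case
    by (induction q rule: poly_mapping_induct) (simp_all add: pm_bilinear_additive pm_extend_add)
qed (simp_all add: pm_bilinear_additive pm_extend_add)

lemma M1_cmul: "M1 (pm_cmul c T) = pm_cmul c (M1 T)"
  by (simp add: M1_eq_pm_extend pm_extend_cmul)

lemma M1_sum: "M1 (sum f A) = (\<Sum>i\<in>A. M1 (f i))"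
  by (simp add: M1_eq_pm_extend pm_extend_sum)

fun letter_sign :: "letter \<Rightarrow> coef" where
  "letter_sign X = 1"
| "letter_sign Y = -1"

lemma C_letter_eq_tensor: "C_letter a = pm_cmul (letter_sign a) (tensor (word [X]) (word [Y]))"
  by (cases a) (simp_all add: tensor_def word_def single_uminus)

lemma C_word_eq_sum:
  "C_word w = (\<Sum>i<length w. pm_cmul (letter_sign (w ! i))
     (tensor (hmul (word [X]) (gamma_inv_word (drop (Suc i) w)))
             (hmul (gamma_inv_word (take i w)) (word [Y]))))"
proof (induction w)
  case (Cons a w)
  have "lact (gamma_inv_letter a) (C_word w)
      = (\<Sum>i<length w. pm_cmul (letter_sign ((a # w) ! Suc i))
          (tensor (hmul (word [X]) (gamma_inv_word (drop (Suc (Suc i)) (a # w))))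
                  (hmul (gamma_inv_word (take (Suc i) (a # w))) (word [Y]))))"
    by (simp add: Cons.IH lact_sum lact_cmul lact_tensor gamma_inv_word_Cons hmul_assoc)
  moreover have "ract (C_letter a) (gamma_inv_word w)
      = pm_cmul (letter_sign a) (tensor (hmul (word [X]) (gamma_inv_word w)) (word [Y]))"
    by (simp add: C_letter_eq_tensor ract_cmul ract_tensor)
  ultimately show ?case
    by (simp only: C_word.simps length_Cons sum.lessThan_Suc_shift) simp
qed simp

definition cyclic_sum :: "('a \<Rightarrow> 'a list \<Rightarrow> 'b::comm_monoid_add) \<Rightarrow> 'a list \<Rightarrow> 'b" where
  "cyclic_sum h w = (\<Sum>i<length w. h (w ! i) (drop (Suc i) w @ take i w))"

lemma cyclic_sum_rotate1: "cyclic_sum h (rotate1 w) = cyclic_sum h w"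
proof (cases w)
  case (Cons a v)
  have "cyclic_sum h (rotate1 w)
      = (\<Sum>i<Suc (length v). h ((v @ [a]) ! i) (drop (Suc i) (v @ [a]) @ take i (v @ [a])))"
    by (simp add: cyclic_sum_def Cons)
  also have "\<dots> = (\<Sum>i<length v. h (v ! i) (drop (Suc i) v @ a # take i v)) + h a v"
    by (simp add: sum.lessThan_Suc nth_append)
  also have "\<dots> = cyclic_sum h w"
    by (simp only: cyclic_sum_def Cons length_Cons sum.lessThan_Suc_shift) (simp add: add.commute)
  finally show ?thesis .
qed simp

lemma cyclic_sum_rotate: "cyclic_sum h (rotate k w) = cyclic_sum h w"
  by (induction k) (simp_all add: cyclic_sum_rotate1)

lemma rho1t_word_eq_cyclic_sum:
  "rho1t (word w) = cyclic_sum (\<lambda>a u. pm_cmul (letter_sign a)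
     (hmul (word [X]) (hmul (gamma_inv_word u) (word [Y])))) w"
  by (simp add: rho1t_def C1t_word C_word_eq_sum M1_sum M1_cmul M1_tensor cyclic_sum_def
      gamma_inv_word_append hmul_assoc)

theorem proposition3p3:
  fixes v w :: "letter list"
  assumes "cyclically_equivalent v w"
  shows "rho1t (word v) = rho1t (word w)"
proof -
  obtain k where "w = rotate k v"
    using assms by (auto simp: cyclically_equivalent_def)
  then show ?thesis
    by (simp add: rho1t_word_eq_cyclic_sum cyclic_sum_rotate)
qed

end
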